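(* There is an absolute constant $c$ such that, for every instance, every arrival order, every admissible choice of the forests $\hat F^{(t)}_{{\rm inh},i}\subseteq\hat F^{(t)}_i$, and every level $i\ge0$, \[ \sum_{t=1}^{n}\bigl|\hat F^{(t)}_{i}\setminus\hat F^{(t)}_{{\rm inh},i}\bigr|\cdot 2^{i+1}\le c\cdot\mathsf{OPT}, \] where $\mathsf{OPT}$ is the cost of an optimal Steiner forest solution to the final instance $(\mathcal{M}^{(n)},D^{(n)})$.
   Context: An offline instance $(\mathcal{M},D)$ consists of demand pairs $D=\{(u_j,v_j)\}$ over a terminal set $V=\{u_j,v_j\}$, each terminal in exactly one pair (the other element of its pair is its mate), and a metric $\mathcal{M}$ on $V$ with all distances at least $1$, viewed as the complete graph on $V$ with edge costs equal to distances; a feasible solution is an edge set in which every pair is connected, and its cost is the sum of its edge costs. A clustering of $V$ is a partition of $V$; $\mathcal{M}/\mathscr{C}$ denotes the shortest-path metric on $\mathscr{C}$ of the graph obtained from the complete weighted graph on $V$ by contracting each cluster of $\mathscr{C}$ into a single vertex. For clusterings $\mathscr{C}_1$ of $V_1$ and $\mathscr{C}_2$ of $V_2$, write $\mathscr{C}_1\preceq\mathscr{C}_2$ if every cluster of $\mathscr{C}_1$ is contained in some cluster of $\mathscr{C}_2$. Clustering procedure: ${\sf level}(v)=\lceil\log_2{\sf dist}_{\mathcal{M}}(v,\text{mate of }v)\rceil$, ${\sf level}(C)=\max_{v\in C}{\sf level}(v)$, $L=\max_v{\sf level}(v)$. $\mathscr{C}_0$ is the singleton clustering. For $i=0,\dots,L$: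 $C\in\mathscr{C}_i$ is $i$-active if ${\sf level}(C)\ge i$; $H_i$ has as vertices the $i$-active clusters of $\mathscr{C}_i$, with an edge between distinct $C_1,C_2$ iff ${\sf dist}_{\mathcal{M}/\mathscr{C}_i}(C_1,C_2)<2^{i+1}$; $\mathscr{C}_{i+1}$ consists of the non-$i$-active clusters of $\mathscr{C}_i$ together with, for each connected component of $H_i$, the union of its clusters. Online setting: $n$ pairs arrive in order; for $1\le t\le n$ the instance $(\mathcal{M}^{(t)},D^{(t)})$ consists of the first $t$ pairs and the metric restricted to their terminals. Running the procedure yields $L^{(t)},\mathscr{C}^{(t)}_i,H^{(t)}_i$; for $i\ge L^{(t)}+1$, $\mathscr{C}^{(t)}_i:=\mathscr{C}^{(t)}_{L^{(t)}+1}$ and $H^{(t)}_i$ is empty; for $t=0$ all $\mathscr{C}^{(0)}_i,H^{(0)}_i$ are empty. It holds that $\mathscr{C}^{(t-1)}_i\preceq\mathscr{C}^{(t)}_i$. Virtual forests are chosen recursively in $t$: $\hat F^{(0)}_i=\emptyset$. Given the spanning forest $\hat F^{(t-1)}_i$ of $H^{(t-1)}_i$, for each edge $(C_1,C_2)\in\hat F^{(t-1)}_i$ let $D_1,D_2$ be the clusters of $\mathscr{C}^{(t)}_i$ containing $C_1,C_2$; if $D_1\ne D_2$ then $(D_1,D_2)$ is an edge of $H^{(t)}_i$, called inherited. Let $\hat F^{(t)}_{{\rm inh},i}$ be an arbitrary spanning forest of the subgraph of $H^{(t)}_i$ formed by its inherited edges, and let $\hat F^{(t)}_i$ be an arbitrary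 spanning forest of $H^{(t)}_i$ containing $\hat F^{(t)}_{{\rm inh},i}$ (these arbitrary choices are the "admissible choices"). *)

theory Defs
  imports Complex_Main
begin

(* Terminals are natural numbers; an online instance is a list ps of demand pairs
   (arrival order = list order); prefix of length t = take t ps.
   d is the metric (only its values on the terminals matter). *)

definition terms :: "(nat \<times> nat) list \<Rightarrow> nat set" where
  "terms P = fst ` set P \<union> snd ` set P"

definition mate :: "(nat \<times> nat) list \<Rightarrow> nat \<Rightarrow> nat" where
  "mate P v = (THE w. (v, w) \<in> set P \<or> (w, v) \<in> set P)"

definition lvl :: "(nat \<Rightarrow> nat \<Rightarrow> real) \<Rightarrow> (nat \<times> nat) list \<Rightarrow> nat \<Rightarrow> int" where
  "lvl d P v = \<lceil>log 2 (d v (mate P v))\<rceil>"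

definition clvl :: "(nat \<Rightarrow> nat \<Rightarrow> real) \<Rightarrow> (nat \<times> nat) list \<Rightarrow> nat set \<Rightarrow> int" where
  "clvl d P C = Max (lvl d P ` C)"

definition active :: "(nat \<Rightarrow> nat \<Rightarrow> real) \<Rightarrow> (nat \<times> nat) list \<Rightarrow> nat \<Rightarrow> nat set \<Rightarrow> bool" where
  "active d P i C \<longleftrightarrow> clvl d P C \<ge> int i"

(* contracted metric M/Cs: shortest walk in the complete graph on V where steps
   inside a cluster cost 0 *)
definition step_cost :: "(nat \<Rightarrow> nat \<Rightarrow> real) \<Rightarrow> nat set set \<Rightarrow> nat \<Rightarrow> nat \<Rightarrow> real" where
  "step_cost d Cs x y = (if \<exists>C\<in>Cs. x \<in> C \<and> y \<in> C then 0 else d x y)"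

definition walk_cost :: "(nat \<Rightarrow> nat \<Rightarrow> real) \<Rightarrow> nat set set \<Rightarrow> nat list \<Rightarrow> real" where
  "walk_cost d Cs xs = sum_list (map (\<lambda>(x, y). step_cost d Cs x y) (zip xs (tl xs)))"

definition cdist :: "(nat \<Rightarrow> nat \<Rightarrow> real) \<Rightarrow> nat set \<Rightarrow> nat set set \<Rightarrow> nat set \<Rightarrow> nat set \<Rightarrow> real" where
  "cdist d V Cs C1 C2 = Inf {walk_cost d Cs xs | xs. xs \<noteq> [] \<and> set xs \<subseteq> V \<and> hd xs \<in> C1 \<and> last xs \<in> C2}"

(* edges of H_i, given the clustering Cs = C_i; an edge is the 2-set {C1, C2} *)
definition Hedges :: "(nat \<Rightarrow> nat \<Rightarrow> real) \<Rightarrow> (nat \<times> nat) list \<Rightarrow> nat set set \<Rightarrow> nat \<Rightarrow> nat set set set" where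
  "Hedges d P Cs i = {{C1, C2} | C1 C2. C1 \<in> Cs \<and> C2 \<in> Cs \<and> active d P i C1 \<and> active d P i C2 \<and>
      C1 \<noteq> C2 \<and> cdist d (terms P) Cs C1 C2 < 2 ^ (i + 1)}"

definition hrel :: "(nat \<Rightarrow> nat \<Rightarrow> real) \<Rightarrow> (nat \<times> nat) list \<Rightarrow> nat set set \<Rightarrow> nat \<Rightarrow> (nat set \<times> nat set) set" where
  "hrel d P Cs i = {(C1, C2). {C1, C2} \<in> Hedges d P Cs i}"

primrec clus :: "(nat \<Rightarrow> nat \<Rightarrow> real) \<Rightarrow> (nat \<times> nat) list \<Rightarrow> nat \<Rightarrow> nat set set" where
  "clus d P 0 = (\<lambda>v. {v}) ` terms P"
| "clus d P (Suc i) = (let Cs = clus d P i in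
     {C \<in> Cs. \<not> active d P i C} \<union>
     {\<Union> {C'. (C, C') \<in> (hrel d P Cs i)\<^sup>*} | C. C \<in> Cs \<and> active d P i C})"

definition H :: "(nat \<Rightarrow> nat \<Rightarrow> real) \<Rightarrow> (nat \<times> nat) list \<Rightarrow> nat \<Rightarrow> nat \<Rightarrow> nat set set set" where
  "H d ps t i = Hedges d (take t ps) (clus d (take t ps) i) i"

definition conn :: "'a set set \<Rightarrow> ('a \<times> 'a) set" where
  "conn F = {(a, b). {a, b} \<in> F}\<^sup>*"

definition is_forest :: "'a set set \<Rightarrow> bool" where
  "is_forest F \<longleftrightarrow> (\<forall>e\<in>F. \<forall>a b. e = {a, b} \<longrightarrow> a \<noteq> b \<and> (a, b) \<notin> conn (F - {e}))"

definition spanning_forest :: "'a set set \<Rightarrow> 'a set set \<Rightarrow> bool" where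
  "spanning_forest E F \<longleftrightarrow> F \<subseteq> E \<and> is_forest F \<and> (\<forall>a b. (a, b) \<in> conn E \<longrightarrow> (a, b) \<in> conn F)"

definition inherited :: "(nat \<Rightarrow> nat \<Rightarrow> real) \<Rightarrow> (nat \<times> nat) list \<Rightarrow> nat \<Rightarrow> nat \<Rightarrow> nat set set set \<Rightarrow> nat set set set" where
  "inherited d ps t i Fprev = {{D1, D2} | C1 C2 D1 D2. {C1, C2} \<in> Fprev \<and>
      D1 \<in> clus d (take t ps) i \<and> D2 \<in> clus d (take t ps) i \<and> C1 \<subseteq> D1 \<and> C2 \<subseteq> D2 \<and> D1 \<noteq> D2}"

definition admissible :: "(nat \<Rightarrow> nat \<Rightarrow> real) \<Rightarrow> (nat \<times> nat) list \<Rightarrow>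
    (nat \<Rightarrow> nat \<Rightarrow> nat set set set) \<Rightarrow> (nat \<Rightarrow> nat \<Rightarrow> nat set set set) \<Rightarrow> bool" where
  "admissible d ps Finh F \<longleftrightarrow> (\<forall>i. F 0 i = {}) \<and>
     (\<forall>t\<in>{1..length ps}. \<forall>i.
        spanning_forest (inherited d ps t i (F (t - 1) i) \<inter> H d ps t i) (Finh t i) \<and>
        Finh t i \<subseteq> F t i \<and> spanning_forest (H d ps t i) (F t i))"

definition valid_instance :: "(nat \<Rightarrow> nat \<Rightarrow> real) \<Rightarrow> (nat \<times> nat) list \<Rightarrow> bool" where
  "valid_instance d ps \<longleftrightarrow> distinct (concat (map (\<lambda>(u, v). [u, v]) ps)) \<and>
     (\<forall>x\<in>terms ps. d x x = 0) \<and>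
     (\<forall>x\<in>terms ps. \<forall>y\<in>terms ps. d x y = d y x) \<and>
     (\<forall>x\<in>terms ps. \<forall>y\<in>terms ps. x \<noteq> y \<longrightarrow> 1 \<le> d x y) \<and>
     (\<forall>x\<in>terms ps. \<forall>y\<in>terms ps. \<forall>z\<in>terms ps. d x z \<le> d x y + d y z)"

definition sf_feasible :: "(nat \<times> nat) list \<Rightarrow> (nat \<times> nat) set \<Rightarrow> bool" where
  "sf_feasible P E \<longleftrightarrow> E \<subseteq> terms P \<times> terms P \<and> (\<forall>(u, v)\<in>set P. (u, v) \<in> (E \<union> E\<inverse>)\<^sup>*)"

definition sf_cost :: "(nat \<Rightarrow> nat \<Rightarrow> real) \<Rightarrow> (nat \<times> nat) set \<Rightarrow> real" where
  "sf_cost d E = (\<Sum>(x, y)\<in>E. d x y)"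

definition OPT :: "(nat \<Rightarrow> nat \<Rightarrow> real) \<Rightarrow> (nat \<times> nat) list \<Rightarrow> real" where
  "OPT d P = Inf (sf_cost d ` {E. sf_feasible P E})"

end

theory Submission
  imports Defs "HOL-Library.Transitive_Closure_Table" "HOL-Library.Disjoint_Sets"
begin

text \<open>
  Let Phi(t) be the number of connected components of H_i^(t). Active clusters of time t - 1
  that are connected in H_i^(t-1) lie in clusters of time t that are connected by inherited edges,
  so the inherited edges leave at most Phi(t - 1) components, plus one for every new active
  cluster (an active cluster containing no active cluster of time t - 1). Each non-inherited
  forest edge merges two of these components, hence
  |F_i^(t) - F_inh,i^(t)| + Phi(t) \<le> Phi(t - 1) + #(new clusters at time t),
  and the sum over t telescopes.

  A new active cluster at time t contains an endpoint of level \<ge> i of the t-th pair, so at most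
  two appear at a time, and endpoints chosen at different times are 2^i apart, for otherwise they
  would already share a cluster of the i-th clustering. Their mates are more than 2^(i-1) away, so
  these endpoints carry disjoint moats of radius 2^(i-1), each of which every Steiner forest must
  cross. This charges 2^(i-2) to OPT per time at which a new cluster appears, and the theorem
  follows with c = 16.
\<close>

section \<open>Components of graphs given by edge sets\<close>

lemma conn_refl [simp]: "(a, a) \<in> conn G"
  by (simp add: conn_def)

lemma conn_edge: "{a, b} \<in> G \<Longrightarrow> (a, b) \<in> conn G"
  by (auto simp: conn_def)

lemma conn_sym: "(a, b) \<in> conn G \<Longrightarrow> (b, a) \<in> conn G"
proof -
  have "sym {(a, b). {a, b} \<in> G}"
    by (auto intro: symI simp: insert_commute)
  then show "(a, b) \<in> conn G \<Longrightarrow> (b, a) \<in> conn G"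
    unfolding conn_def by (auto dest: symD sym_rtrancl)
qed

lemma conn_trans: "(a, b) \<in> conn G \<Longrightarrow> (b, c) \<in> conn G \<Longrightarrow> (a, c) \<in> conn G"
  unfolding conn_def by (rule rtrancl_trans)

lemma conn_mono: "G \<subseteq> G' \<Longrightarrow> conn G \<subseteq> conn G'"
  unfolding conn_def by (rule rtrancl_mono) auto

lemma spanning_forest_conn:
  assumes "spanning_forest G F"
  shows "conn F = conn G"
proof
  show "conn F \<subseteq> conn G"
    using assms by (intro conn_mono) (simp add: spanning_forest_def)
  show "conn G \<subseteq> conn F"
    using assms by (auto simp: spanning_forest_def)
qed

definition component :: "'a set set \<Rightarrow> 'a set \<Rightarrow> 'a \<Rightarrow> 'a set" where
  "component G V v = {w \<in> V. (v, w) \<in> conn G}"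

definition num_components :: "'a set set \<Rightarrow> 'a set \<Rightarrow> nat" where
  "num_components G V = card (component G V ` V)"

lemma component_self: "v \<in> V \<Longrightarrow> v \<in> component G V v"
  by (simp add: component_def)

lemma component_eq: "(a, b) \<in> conn G \<Longrightarrow> component G V a = component G V b"
  unfolding component_def by (blast intro: conn_trans conn_sym)

lemma num_components_cong: "conn G = conn G' \<Longrightarrow> num_components G V = num_components G' V"
  by (simp add: num_components_def component_def)

lemma card_image_le_factor:
  assumes "finite A" and "\<And>x y. x \<in> A \<Longrightarrow> y \<in> A \<Longrightarrow> c x = c y \<Longrightarrow> f x = f y"
  shows "card (f ` A) \<le> card (c ` A)"
proof -
  define h where "h K = f (SOME x. x \<in> A \<and> c x = K)" for K
  have "h (c x) = f x" if "x \<in> A" for x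
  proof -
    have "\<exists>y. y \<in> A \<and> c y = c x"
      using that by blast
    then show ?thesis
      unfolding h_def by (metis (mono_tags, lifting) someI_ex assms(2) that)
  qed
  then have "f ` A = h ` c ` A"
    by (auto simp: image_image cong: image_cong)
  then show ?thesis
    using assms(1) by (simp add: card_image_le)
qed

lemma num_components_less:
  assumes "finite V" "G \<subseteq> G'" "a \<in> V" "b \<in> V" "(a, b) \<notin> conn G" "(a, b) \<in> conn G'"
  shows "num_components G' V < num_components G V"
proof -
  define merge where "merge K = \<Union> (component G' V ` K)" for K
  have merge: "merge (component G V v) = component G' V v" if "v \<in> V" for v
    using that by (auto simp: merge_def component_def intro: conn_trans[OF subsetD[OF conn_mono[OF assms(2)]]])
  have "component G' V ` V = merge ` component G V ` V"
    by (simp add: image_image merge cong: image_cong)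
  moreover have "\<not> inj_on merge (component G V ` V)"
  proof
    assume inj: "inj_on merge (component G V ` V)"
    have "merge (component G V a) = merge (component G V b)"
      using merge assms(3,4) component_eq[OF assms(6)] by simp
    then have "component G V a = component G V b"
      using inj_onD[OF inj] assms(3,4) by blast
    then have "b \<in> component G V a"
      using component_self[OF assms(4)] by simp
    then show False
      using assms(5) by (simp add: component_def)
  qed
  ultimately show ?thesis
    unfolding num_components_def using assms(1)
    by (metis card_image_le finite_imageI inj_on_iff_eq_card order_le_imp_less_or_eq)
qed

lemma forest_extension_card_le:
  assumes forest: "is_forest F" and "G \<subseteq> F" "finite F" "finite V"
    and edges: "\<And>e. e \<in> F \<Longrightarrow> \<exists>a b. e = {a, b} \<and> a \<in> V \<and> b \<in> V"
  shows "card (F - G) + num_components F V \<le> num_components G V"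
proof -
  have "card A + num_components (G \<union> A) V \<le> num_components G V" if "A \<subseteq> F - G" for A
  proof -
    have "finite A"
      using that \<open>finite F\<close> finite_subset by blast
    then show ?thesis
      using that
    proof (induction A rule: finite_induct)
      case empty
      then show ?case by simp
    next
      case (insert e A)
      obtain a b where e: "e = {a, b}" "a \<in> V" "b \<in> V"
        using edges insert.prems by blast
      have "(a, b) \<notin> conn (F - {e})"
        using forest e(1) insert.prems unfolding is_forest_def by blast
      moreover have "G \<union> A \<subseteq> F - {e}"
        using insert.prems insert.hyps(2) \<open>G \<subseteq> F\<close> by blast
      ultimately have "(a, b) \<notin> conn (G \<union> A)"
        using conn_mono by blast
      moreover have "(a, b) \<in> conn (G \<union> insert e A)"
        using e(1) by (intro conn_edge) simp
      ultimately have "num_components (G \<union> insert e A) V < num_components (G \<union> A) V"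
        using e(2,3) \<open>finite V\<close> by (intro num_components_less) auto
      then show ?case
        using insert by simp
    qed
  qed
  moreover have "G \<union> (F - G) = F"
    using \<open>G \<subseteq> F\<close> by blast
  ultimately show ?thesis
    by (metis order_refl)
qed

section \<open>The moat lower bound on \<open>OPT\<close>\<close>

lemma finite_terms: "finite (terms P)"
  by (simp add: terms_def)

lemma abs_diff_le_sum_path_edges:
  fixes g :: "'a \<Rightarrow> real"
  assumes "finite E" "rtrancl_path (\<lambda>a b. (a, b) \<in> E \<union> E\<inverse>) x xs y" "distinct (x # xs)"
  shows "\<bar>g x - g y\<bar> \<le> (\<Sum>(a, b)\<in>{(a, b) \<in> E. a \<in> set (x # xs) \<and> b \<in> set (x # xs)}. \<bar>g a - g b\<bar>)"
  using assms(2,3)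
proof (induction rule: rtrancl_path.induct)
  case (base x)
  then show ?case
    by (simp add: sum_nonneg split_def)
next
  case (step x z zs y)
  let ?inside = "\<lambda>X. {(a, b) \<in> E. a \<in> X \<and> b \<in> X}"
  have finite_inside: "finite (?inside X)" for X
    by (rule finite_subset[OF _ \<open>finite E\<close>]) auto
  obtain e where e: "e \<in> E" "e = (x, z) \<or> e = (z, x)"
    using step.hyps(1) by auto
  have "\<bar>g x - g y\<bar> \<le> \<bar>g x - g z\<bar> + \<bar>g z - g y\<bar>"
    by linarith
  also have "\<dots> \<le> (\<lambda>(a, b). \<bar>g a - g b\<bar>) e + (\<Sum>(a, b)\<in>?inside (set (z # zs)). \<bar>g a - g b\<bar>)"
    using step.IH step.prems e(2) by auto
  also have "\<dots> = (\<Sum>(a, b)\<in>insert e (?inside (set (z # zs))). \<bar>g a - g b\<bar>)"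
    using e step.prems by (subst sum.insert[OF finite_inside]) auto
  also have "\<dots> \<le> (\<Sum>(a, b)\<in>?inside (set (x # z # zs)). \<bar>g a - g b\<bar>)"
    using e by (intro sum_mono2[OF finite_inside]) auto
  finally show ?case .
qed

lemma abs_diff_le_sum_edges:
  fixes g :: "'a \<Rightarrow> real"
  assumes "finite E" "(x, y) \<in> (E \<union> E\<inverse>)\<^sup>*"
  shows "\<bar>g x - g y\<bar> \<le> (\<Sum>(a, b)\<in>E. \<bar>g a - g b\<bar>)"
proof -
  let ?edge = "\<lambda>a b. (a, b) \<in> E \<union> E\<inverse>"
  have "?edge\<^sup>*\<^sup>* x y"
    using assms(2) by (simp add: rtrancl_def)
  then obtain xs where "rtrancl_path ?edge x xs y"
    by (auto simp: rtranclp_eq_rtrancl_path)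
  then obtain xs' where "rtrancl_path ?edge x xs' y" "distinct (x # xs')"
    by (rule rtrancl_path_distinct)
  then have "\<bar>g x - g y\<bar> \<le> (\<Sum>(a, b)\<in>{(a, b) \<in> E. a \<in> set (x # xs') \<and> b \<in> set (x # xs')}. \<bar>g a - g b\<bar>)"
    by (rule abs_diff_le_sum_path_edges[OF assms(1)])
  also have "\<dots> \<le> (\<Sum>(a, b)\<in>E. \<bar>g a - g b\<bar>)"
    using assms(1) by (intro sum_mono2) auto
  finally show ?thesis .
qed

lemma valid_instance_dist_self: "valid_instance d ps \<Longrightarrow> x \<in> terms ps \<Longrightarrow> d x x = 0"
  unfolding valid_instance_def by blast

lemma valid_instance_dist_sym:
  "valid_instance d ps \<Longrightarrow> x \<in> terms ps \<Longrightarrow> y \<in> terms ps \<Longrightarrow> d x y = d y x"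
  unfolding valid_instance_def by blast

lemma valid_instance_dist_ge_1:
  "valid_instance d ps \<Longrightarrow> x \<in> terms ps \<Longrightarrow> y \<in> terms ps \<Longrightarrow> x \<noteq> y \<Longrightarrow> 1 \<le> d x y"
  unfolding valid_instance_def by blast

lemma valid_instance_dist_nonneg:
  "valid_instance d ps \<Longrightarrow> x \<in> terms ps \<Longrightarrow> y \<in> terms ps \<Longrightarrow> 0 \<le> d x y"
  by (cases "x = y") (auto dest: valid_instance_dist_self valid_instance_dist_ge_1)

lemma valid_instance_triangle:
  "valid_instance d ps \<Longrightarrow> x \<in> terms ps \<Longrightarrow> y \<in> terms ps \<Longrightarrow> z \<in> terms ps \<Longrightarrow> d x z \<le> d x y + d y z"
  unfolding valid_instance_def by blast

definition moat :: "(nat \<Rightarrow> nat \<Rightarrow> real) \<Rightarrow> real \<Rightarrow> nat \<Rightarrow> nat \<Rightarrow> real" where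
  "moat d \<rho> x a = min (d x a) \<rho>"

lemma moat_crossed:
  assumes vi: "valid_instance d ps" and feasible: "sf_feasible ps E"
    and "(x, y) \<in> set ps \<union> (set ps)\<inverse>" "x \<in> terms ps" "0 < \<rho>" "\<rho> \<le> d x y"
  shows "\<rho> \<le> (\<Sum>(a, b)\<in>E. \<bar>moat d \<rho> x a - moat d \<rho> x b\<bar>)"
proof -
  have E: "E \<subseteq> terms ps \<times> terms ps" and connected: "\<And>u v. (u, v) \<in> set ps \<Longrightarrow> (u, v) \<in> (E \<union> E\<inverse>)\<^sup>*"
    using feasible unfolding sf_feasible_def by auto
  have "finite E"
    using E by (rule finite_subset) (simp add: finite_terms)
  have "(E \<union> E\<inverse>)\<inverse> = E \<union> E\<inverse>"
    by auto
  then have "(x, y) \<in> (E \<union> E\<inverse>)\<^sup>*"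
    using assms(3) connected by (metis Un_iff converseD rtrancl_converseI)
  then have "\<bar>moat d \<rho> x x - moat d \<rho> x y\<bar> \<le> (\<Sum>(a, b)\<in>E. \<bar>moat d \<rho> x a - moat d \<rho> x b\<bar>)"
    by (rule abs_diff_le_sum_edges[OF \<open>finite E\<close>])
  then show ?thesis
    using valid_instance_dist_self[OF vi assms(4)] assms(5,6) by (simp add: moat_def)
qed

lemma moat_lipschitz:
  assumes "valid_instance d ps" "x \<in> terms ps" "a \<in> terms ps" "b \<in> terms ps"
  shows "\<bar>moat d \<rho> x a - moat d \<rho> x b\<bar> \<le> d a b"
proof -
  have "d x a \<le> d x b + d b a" "d x b \<le> d x a + d a b" "d b a = d a b"
    using assms valid_instance_triangle valid_instance_dist_sym by metis+
  then show ?thesis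
    by (simp add: moat_def min_def abs_le_iff)
qed

lemma card_moats_containing_le_1:
  assumes vi: "valid_instance d ps" and S: "S \<subseteq> terms ps" and "c \<in> terms ps"
    and sep: "\<And>x y. x \<in> S \<Longrightarrow> y \<in> S \<Longrightarrow> x \<noteq> y \<Longrightarrow> 2 * \<rho> \<le> d x y"
  shows "card {x \<in> S. d x c < \<rho>} \<le> 1"
proof -
  have "x = y" if "x \<in> S" "y \<in> S" "d x c < \<rho>" "d y c < \<rho>" for x y
  proof (rule ccontr)
    assume "x \<noteq> y"
    moreover have "d x y \<le> d x c + d y c"
      using that(1,2) S \<open>c \<in> terms ps\<close> valid_instance_triangle[OF vi] valid_instance_dist_sym[OF vi]
      by (metis subsetD)
    ultimately show False
      using sep[OF that(1,2)] that(3,4) by linarith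
  qed
  moreover have "finite S"
    using S finite_terms by (rule finite_subset)
  ultimately show ?thesis
    by (auto simp: card_le_Suc0_iff_eq)
qed

lemma moat_edge_charge:
  assumes vi: "valid_instance d ps" and S: "S \<subseteq> terms ps" and ab: "a \<in> terms ps" "b \<in> terms ps"
    and sep: "\<And>x y. x \<in> S \<Longrightarrow> y \<in> S \<Longrightarrow> x \<noteq> y \<Longrightarrow> 2 * \<rho> \<le> d x y"
  shows "(\<Sum>x\<in>S. \<bar>moat d \<rho> x a - moat d \<rho> x b\<bar>) \<le> 2 * d a b"
proof -
  have "finite S"
    using S finite_terms by (rule finite_subset)
  have "0 \<le> d a b"
    using valid_instance_dist_nonneg[OF vi ab] .
  have "(\<Sum>x\<in>S. \<bar>moat d \<rho> x a - moat d \<rho> x b\<bar>)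
      \<le> (\<Sum>x\<in>S. (if d x a < \<rho> then d a b else 0) + (if d x b < \<rho> then d a b else 0))"
  proof (rule sum_mono)
    fix x assume "x \<in> S"
    then show "\<bar>moat d \<rho> x a - moat d \<rho> x b\<bar> \<le> (if d x a < \<rho> then d a b else 0) + (if d x b < \<rho> then d a b else 0)"
      using moat_lipschitz[OF vi _ ab, of x \<rho>] S \<open>0 \<le> d a b\<close> by (auto simp: moat_def min_def)
  qed
  also have "\<dots> = card {x \<in> S. d x a < \<rho>} * d a b + card {x \<in> S. d x b < \<rho>} * d a b"
    using \<open>finite S\<close> by (simp add: sum.distrib sum.inter_filter[symmetric])
  also have "\<dots> \<le> 1 * d a b + 1 * d a b"
    using card_moats_containing_le_1[OF vi S _ sep] ab \<open>0 \<le> d a b\<close>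
    by (intro add_mono mult_right_mono) simp_all
  finally show ?thesis
    by simp
qed

text \<open>Around each terminal of \<open>S\<close> lies a moat of radius \<open>\<rho>\<close>; the moats are disjoint and each
  of them is crossed by every feasible solution. An edge \<open>(a, b)\<close> changes \<open>moat d \<rho> x\<close> by at
  most \<open>d a b\<close>, and only for the at most two \<open>x\<close> whose moat contains \<open>a\<close> or \<open>b\<close>.\<close>

lemma moat_lower_bound:
  fixes \<rho> :: real
  assumes vi: "valid_instance d ps" and feasible: "sf_feasible ps E"
    and S: "S \<subseteq> terms ps" and "\<rho> > 0"
    and far: "\<And>x. x \<in> S \<Longrightarrow> \<exists>y. (x, y) \<in> set ps \<union> (set ps)\<inverse> \<and> \<rho> \<le> d x y"
    and sep: "\<And>x y. x \<in> S \<Longrightarrow> y \<in> S \<Longrightarrow> x \<noteq> y \<Longrightarrow> 2 * \<rho> \<le> d x y"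
  shows "card S * \<rho> \<le> 2 * sf_cost d E"
proof -
  let ?jump = "\<lambda>x a b. \<bar>moat d \<rho> x a - moat d \<rho> x b\<bar>"
  have E: "E \<subseteq> terms ps \<times> terms ps"
    using feasible by (simp add: sf_feasible_def)
  have crossed: "\<rho> \<le> (\<Sum>(a, b)\<in>E. ?jump x a b)" if "x \<in> S" for x
    using far[OF that] moat_crossed[OF vi feasible] S that \<open>\<rho> > 0\<close> by blast
  have "card S * \<rho> \<le> (\<Sum>x\<in>S. \<Sum>(a, b)\<in>E. ?jump x a b)"
    using sum_mono[of S "\<lambda>_. \<rho>", OF crossed] by simp
  also have "\<dots> = (\<Sum>(a, b)\<in>E. \<Sum>x\<in>S. ?jump x a b)"
    unfolding split_def by (rule sum.swap)
  also have "\<dots> \<le> (\<Sum>(a, b)\<in>E. 2 * d a b)"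
    using moat_edge_charge[OF vi S _ _ sep] E by (intro sum_mono) auto
  also have "\<dots> = 2 * sf_cost d E"
    by (simp add: sf_cost_def sum_distrib_left split_def)
  finally show ?thesis .
qed

lemma moat_lower_bound_OPT:
  fixes \<rho> :: real
  assumes "valid_instance d ps" "S \<subseteq> terms ps" "\<rho> > 0"
    and "\<And>x. x \<in> S \<Longrightarrow> \<exists>y. (x, y) \<in> set ps \<union> (set ps)\<inverse> \<and> \<rho> \<le> d x y"
    and "\<And>x y. x \<in> S \<Longrightarrow> y \<in> S \<Longrightarrow> x \<noteq> y \<Longrightarrow> 2 * \<rho> \<le> d x y"
  shows "card S * \<rho> \<le> 2 * OPT d ps"
proof -
  have "sf_feasible ps (set ps)"
    unfolding sf_feasible_def terms_def by force
  then have "card S * \<rho> / 2 \<le> OPT d ps"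
    unfolding OPT_def using moat_lower_bound[OF assms(1) _ assms(2-5)]
    by (intro cInf_greatest) force+
  then show ?thesis
    by simp
qed

section \<open>Mates and levels\<close>

lemma set_concat_pairs: "set (concat (map (\<lambda>(u, v). [u, v]) P)) = terms P"
  by (induction P) (auto simp: terms_def)

lemma valid_instance_take: "valid_instance d ps \<Longrightarrow> valid_instance d (take t ps)"
proof -
  assume vi: "valid_instance d ps"
  have "terms (take t ps) \<subseteq> terms ps"
    unfolding terms_def by (intro Un_mono image_mono set_take_subset)
  moreover have "distinct (concat (map (\<lambda>(u, v). [u, v]) (take t ps)))"
    using vi distinct_append[of "concat (map (\<lambda>(u, v). [u, v]) (take t ps))"]
    unfolding valid_instance_def by (metis append_take_drop_id concat_append map_append)
  ultimately show ?thesis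
    using vi unfolding valid_instance_def by blast
qed

lemma pair_unique:
  assumes "valid_instance d P" "(x, y) \<in> set P \<union> (set P)\<inverse>" "(x, z) \<in> set P \<union> (set P)\<inverse>"
  shows "y = z"
proof -
  have "distinct (concat (map (\<lambda>(u, v). [u, v]) P))"
    using assms(1) by (simp add: valid_instance_def)
  then show ?thesis
    using assms(2,3)
  proof (induction P)
    case (Cons p P)
    then show ?case
      by (cases p) (force simp: set_concat_pairs terms_def)
  qed simp
qed

lemma pair_neq:
  assumes "valid_instance d P" "(x, y) \<in> set P"
  shows "x \<noteq> y"
proof -
  have "distinct (concat (map (\<lambda>(u, v). [u, v]) P))"
    using assms(1) by (simp add: valid_instance_def)
  then show ?thesis
    using assms(2) by (induction P) auto
qed

lemma mate_eqI:
  assumes "valid_instance d P'" "set P \<subseteq> set P'" "(x, y) \<in> set P \<union> (set P)\<inverse>"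
  shows "mate P x = y"
  unfolding mate_def using assms pair_unique[OF assms(1)] by (intro the_equality) blast+

lemma pair_exists: "x \<in> terms P \<Longrightarrow> \<exists>y. (x, y) \<in> set P \<union> (set P)\<inverse>"
  by (force simp: terms_def)

lemma lvl_eq_if_subset:
  assumes "valid_instance d P'" "set P \<subseteq> set P'" "x \<in> terms P"
  shows "lvl d P x = lvl d P' x"
proof -
  obtain y where y: "(x, y) \<in> set P \<union> (set P)\<inverse>"
    using pair_exists[OF assms(3)] by blast
  then have "(x, y) \<in> set P' \<union> (set P')\<inverse>"
    using assms(2) by blast
  then show ?thesis
    unfolding lvl_def using mate_eqI[OF assms(1,2) y] mate_eqI[OF assms(1) order_refl] by simp
qed

lemma far_from_mate_if_lvl_ge:
  assumes vi: "valid_instance d P" and x: "x \<in> terms P" and "int i \<le> lvl d P x"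
  shows "\<exists>y. (x, y) \<in> set P \<union> (set P)\<inverse> \<and> 2 ^ i / 2 \<le> d x y"
proof -
  obtain y where y: "(x, y) \<in> set P \<union> (set P)\<inverse>"
    using pair_exists[OF x] by blast
  have "y \<in> terms P"
    using y by (force simp: terms_def)
  moreover have "x \<noteq> y"
    using y pair_neq[OF vi] by blast
  ultimately have "1 \<le> d x y"
    using valid_instance_dist_ge_1[OF vi x] by blast
  moreover have "int i \<le> \<lceil>log 2 (d x y)\<rceil>"
    using assms(3) mate_eqI[OF vi order_refl y] by (simp add: lvl_def)
  then have "real i - 1 < log 2 (d x y)"
    by (simp add: le_ceiling_iff)
  ultimately have "2 powr (real i - 1) < d x y"
    by (subst (asm) less_log_iff) auto
  then show ?thesis
    using y by (intro exI[of _ y]) (simp add: powr_diff powr_realpow)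
qed

section \<open>The clusterings\<close>

lemma partition_on_block_eq:
  "partition_on V Ps \<Longrightarrow> p \<in> Ps \<Longrightarrow> q \<in> Ps \<Longrightarrow> x \<in> p \<Longrightarrow> x \<in> q \<Longrightarrow> p = q"
  using partition_onD2 disjointD by blast

lemma rtrancl_Image_subset:
  assumes "r \<subseteq> A \<times> A" "a \<in> A"
  shows "r\<^sup>* `` {a} \<subseteq> A"
proof
  fix b assume "b \<in> r\<^sup>* `` {a}"
  then have "(a, b) \<in> r\<^sup>*"
    by simp
  then show "b \<in> A"
    using assms by (induction rule: rtrancl_induct) auto
qed

lemma sym_rtrancl_Image_eq: "sym r \<Longrightarrow> (a, b) \<in> r\<^sup>* \<Longrightarrow> r\<^sup>* `` {a} = r\<^sup>* `` {b}"
  using sym_rtrancl[of r] by (auto intro: rtrancl_trans dest: symD)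

lemma merged_block_eq:
  assumes part: "partition_on V Cs" and "A \<subseteq> Cs" "r \<subseteq> A \<times> A" "sym r"
    and D: "D \<in> (Cs - A) \<union> (\<lambda>C. \<Union> (r\<^sup>* `` {C})) ` A" and C: "C \<in> Cs" and x: "x \<in> D" "x \<in> C"
  shows "D = (if C \<in> A then \<Union> (r\<^sup>* `` {C}) else C)"
  using D
proof (elim UnE imageE)
  assume "D \<in> Cs - A"
  then show ?thesis
    using partition_on_block_eq[OF part] C x by auto
next
  fix C0 assume D: "D = \<Union> (r\<^sup>* `` {C0})" "C0 \<in> A"
  then obtain C' where C': "(C0, C') \<in> r\<^sup>*" "x \<in> C'"
    using x(1) by blast
  then have "C' \<in> A"
    using rtrancl_Image_subset[OF \<open>r \<subseteq> A \<times> A\<close> D(2)] by blast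
  then have "C' = C"
    using partition_on_block_eq[OF part _ C C'(2) x(2)] \<open>A \<subseteq> Cs\<close> by blast
  then show ?thesis
    using D C' \<open>C' \<in> A\<close> sym_rtrancl_Image_eq[OF \<open>sym r\<close>] by simp
qed

lemma partition_on_merge:
  assumes part: "partition_on V Cs" and "A \<subseteq> Cs" "r \<subseteq> A \<times> A" "sym r"
  shows "partition_on V ((Cs - A) \<union> (\<lambda>C. \<Union> (r\<^sup>* `` {C})) ` A)" (is "partition_on V ?Ds")
proof (rule partition_onI)
  show "\<Union> ?Ds = V"
    using partition_onD1[OF part] rtrancl_Image_subset[OF \<open>r \<subseteq> A \<times> A\<close>] \<open>A \<subseteq> Cs\<close> by blast
  have "C \<subseteq> \<Union> (r\<^sup>* `` {C})" for C
    by blast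
  then have "\<Union> (r\<^sup>* `` {C}) \<noteq> {}" if "C \<in> A" for C
    using that \<open>A \<subseteq> Cs\<close> partition_onD3[OF part] by (metis subset_empty subsetD)
  then show "{} \<notin> ?Ds"
    using partition_onD3[OF part] by blast
  fix p q assume "p \<in> ?Ds" "q \<in> ?Ds" "p \<noteq> q"
  show "disjnt p q"
  proof (rule ccontr)
    assume "\<not> disjnt p q"
    then obtain x where "x \<in> p" "x \<in> q"
      by (auto simp: disjnt_def)
    moreover have "x \<in> V"
      using \<open>x \<in> p\<close> \<open>p \<in> ?Ds\<close> \<open>\<Union> ?Ds = V\<close> by blast
    then obtain C where "C \<in> Cs" "x \<in> C"
      using partition_onD1[OF part] by blast
    ultimately show False
      using merged_block_eq[OF assms \<open>p \<in> ?Ds\<close>] merged_block_eq[OF assms \<open>q \<in> ?Ds\<close>] \<open>p \<noteq> q\<close>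
      by metis
  qed
qed

lemma hrel_sym: "(C1, C2) \<in> hrel d P Cs i \<Longrightarrow> (C2, C1) \<in> hrel d P Cs i"
  unfolding hrel_def by (simp add: insert_commute)

lemma hrelD:
  assumes "(C1, C2) \<in> hrel d P Cs i"
  shows "C1 \<in> Cs" "C2 \<in> Cs" "active d P i C1" "active d P i C2" "C1 \<noteq> C2"
    and "cdist d (terms P) Cs C1 C2 < 2 ^ (i + 1) \<or> cdist d (terms P) Cs C2 C1 < 2 ^ (i + 1)"
  using assms unfolding hrel_def Hedges_def by (auto simp: doubleton_eq_iff)

lemma clus_Suc_eq:
  "clus d P (Suc i) = (clus d P i - {C \<in> clus d P i. active d P i C}) \<union>
     (\<lambda>C. \<Union> ((hrel d P (clus d P i) i)\<^sup>* `` {C})) ` {C \<in> clus d P i. active d P i C}"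
  unfolding clus.simps(2) Let_def Image_singleton by (intro arg_cong2[where f = "(\<union>)"]) blast+

lemma partition_on_clus: "partition_on (terms P) (clus d P i)"
proof (induction i)
  case 0
  show ?case
    by (simp add: partition_on_singletons)
next
  case (Suc i)
  have "hrel d P (clus d P i) i \<subseteq> {C \<in> clus d P i. active d P i C} \<times> {C \<in> clus d P i. active d P i C}"
    by (auto dest: hrelD(1-4))
  moreover have "sym (hrel d P (clus d P i) i)"
    by (auto intro: symI hrel_sym)
  ultimately show ?case
    unfolding clus_Suc_eq using Suc.IH by (intro partition_on_merge) auto
qed

lemma clus_block_eq: "C1 \<in> clus d P i \<Longrightarrow> C2 \<in> clus d P i \<Longrightarrow> x \<in> C1 \<Longrightarrow> x \<in> C2 \<Longrightarrow> C1 = C2"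
  by (rule partition_on_block_eq[OF partition_on_clus])

lemma clus_subset: "C \<in> clus d P i \<Longrightarrow> C \<subseteq> terms P"
  using partition_onD1[OF partition_on_clus] by blast

lemma clus_nonempty: "C \<in> clus d P i \<Longrightarrow> C \<noteq> {}"
  using partition_onD3[OF partition_on_clus] by blast

lemma clus_cover: "x \<in> terms P \<Longrightarrow> \<exists>C\<in>clus d P i. x \<in> C"
  using partition_onD1[OF partition_on_clus] by blast

lemma finite_clus: "finite (clus d P i)"
  using finite_elements[OF finite_terms partition_on_clus] .

lemma finite_clus_block: "C \<in> clus d P i \<Longrightarrow> finite C"
  by (rule finite_subset[OF clus_subset finite_terms])

lemma lvl_le_clvl: "finite C \<Longrightarrow> x \<in> C \<Longrightarrow> lvl d P x \<le> clvl d P C"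
  unfolding clvl_def by simp

lemma set_zip_tl: "(x, y) \<in> set (zip xs (tl xs)) \<Longrightarrow> x \<in> set xs \<and> y \<in> set xs"
  by (cases xs) (auto dest: set_zip_leftD set_zip_rightD)

lemma walk_cost_nonneg:
  assumes "set xs \<subseteq> V" "\<And>x y. x \<in> V \<Longrightarrow> y \<in> V \<Longrightarrow> 0 \<le> d x y"
  shows "0 \<le> walk_cost d Cs xs"
  unfolding walk_cost_def
proof (rule sum_list_nonneg)
  fix c assume "c \<in> set (map (\<lambda>(x, y). step_cost d Cs x y) (zip xs (tl xs)))"
  then obtain x y where xy: "(x, y) \<in> set (zip xs (tl xs))" and c: "c = step_cost d Cs x y"
    by auto
  have "x \<in> V" "y \<in> V"
    using set_zip_tl[OF xy] assms(1) by auto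
  then have "0 \<le> d x y"
    by (rule assms(2))
  then show "0 \<le> c"
    by (simp add: c step_cost_def)
qed

lemma walk_cost_mono:
  assumes "set xs \<subseteq> V" "\<And>x y. x \<in> V \<Longrightarrow> y \<in> V \<Longrightarrow> 0 \<le> d x y"
    and coarser: "\<forall>C\<in>Cs. \<exists>D\<in>Ds. C \<subseteq> D"
  shows "walk_cost d Ds xs \<le> walk_cost d Cs xs"
  unfolding walk_cost_def
proof (rule sum_list_mono)
  fix p assume p: "p \<in> set (zip xs (tl xs))"
  obtain x y where "p = (x, y)"
    by force
  then have "x \<in> V" "y \<in> V"
    using set_zip_tl[of x y xs] p assms(1) by auto
  then have "0 \<le> d x y"
    by (rule assms(2))
  moreover have "(\<exists>C\<in>Cs. x \<in> C \<and> y \<in> C) \<longrightarrow> (\<exists>D\<in>Ds. x \<in> D \<and> y \<in> D)"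
    using coarser by (meson subsetD)
  ultimately show "(\<lambda>(x, y). step_cost d Ds x y) p \<le> (\<lambda>(x, y). step_cost d Cs x y) p"
    unfolding \<open>p = (x, y)\<close> step_cost_def by simp
qed

lemma cdist_le_walk_cost:
  assumes "xs \<noteq> []" "set xs \<subseteq> V" "hd xs \<in> C1" "last xs \<in> C2"
    and "\<And>x y. x \<in> V \<Longrightarrow> y \<in> V \<Longrightarrow> 0 \<le> d x y"
  shows "cdist d V Cs C1 C2 \<le> walk_cost d Cs xs"
  unfolding cdist_def
proof (rule cInf_lower)
  show "bdd_below {walk_cost d Cs xs |xs. xs \<noteq> [] \<and> set xs \<subseteq> V \<and> hd xs \<in> C1 \<and> last xs \<in> C2}"
    using walk_cost_nonneg assms(5) by (intro bdd_belowI[of _ 0]) blast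
qed (use assms in blast)

lemma cdist_le_dist:
  assumes "x \<in> V" "y \<in> V" "x \<in> C1" "y \<in> C2" "\<And>x y. x \<in> V \<Longrightarrow> y \<in> V \<Longrightarrow> 0 \<le> d x y"
  shows "cdist d V Cs C1 C2 \<le> d x y"
proof -
  have "cdist d V Cs C1 C2 \<le> walk_cost d Cs [x, y]"
    using assms by (intro cdist_le_walk_cost) auto
  also have "\<dots> \<le> d x y"
    using assms by (simp add: walk_cost_def step_cost_def)
  finally show ?thesis .
qed

lemma cdist_mono:
  assumes "V \<subseteq> V'" "\<And>x y. x \<in> V' \<Longrightarrow> y \<in> V' \<Longrightarrow> 0 \<le> d x y"
    and coarser: "\<forall>C\<in>Cs. \<exists>D\<in>Ds. C \<subseteq> D"
    and "C1 \<subseteq> D1" "C1 \<noteq> {}" "C1 \<subseteq> V" "C2 \<subseteq> D2" "C2 \<noteq> {}" "C2 \<subseteq> V"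
  shows "cdist d V' Ds D1 D2 \<le> cdist d V Cs C1 C2"
  unfolding cdist_def
proof (rule cInf_mono)
  obtain x y where "x \<in> C1" "y \<in> C2"
    using assms by blast
  then show "{walk_cost d Cs xs |xs. xs \<noteq> [] \<and> set xs \<subseteq> V \<and> hd xs \<in> C1 \<and> last xs \<in> C2} \<noteq> {}"
    using assms by (auto intro!: exI[of _ "[x, y]"])
  show "bdd_below {walk_cost d Ds xs |xs. xs \<noteq> [] \<and> set xs \<subseteq> V' \<and> hd xs \<in> D1 \<and> last xs \<in> D2}"
    using walk_cost_nonneg assms(2) by (intro bdd_belowI[of _ 0]) blast
  fix c assume "c \<in> {walk_cost d Cs xs |xs. xs \<noteq> [] \<and> set xs \<subseteq> V \<and> hd xs \<in> C1 \<and> last xs \<in> C2}"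
  then obtain xs where xs: "c = walk_cost d Cs xs" "xs \<noteq> []" "set xs \<subseteq> V" "hd xs \<in> C1" "last xs \<in> C2"
    by blast
  have "walk_cost d Ds xs \<le> walk_cost d Cs xs"
    using xs(3) assms(1,2) coarser by (intro walk_cost_mono[of xs V']) auto
  moreover have "walk_cost d Ds xs \<in> {walk_cost d Ds xs |xs. xs \<noteq> [] \<and> set xs \<subseteq> V' \<and> hd xs \<in> D1 \<and> last xs \<in> D2}"
    using xs assms(1,4,7) by blast
  ultimately show "\<exists>c'\<in>{walk_cost d Ds xs |xs. xs \<noteq> [] \<and> set xs \<subseteq> V' \<and> hd xs \<in> D1 \<and> last xs \<in> D2}. c' \<le> c"
    using xs(1) by blast
qed

lemma clus_same_block:
  assumes vi: "valid_instance d P" and "x \<in> terms P" "y \<in> terms P"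
    and "int i \<le> lvl d P x" "int i \<le> lvl d P y" "d x y < 2 ^ i"
  shows "\<exists>C\<in>clus d P i. x \<in> C \<and> y \<in> C"
proof (cases i)
  case 0
  then have "x = y"
    using valid_instance_dist_ge_1[OF vi assms(2,3)] assms(6) by fastforce
  then show ?thesis
    using 0 assms(2) by auto
next
  case (Suc j)
  let ?r = "hrel d P (clus d P j) j"
  obtain Cx Cy where C: "Cx \<in> clus d P j" "x \<in> Cx" "Cy \<in> clus d P j" "y \<in> Cy"
    using clus_cover assms(2,3) by metis
  have active: "active d P j C" if "C \<in> clus d P j" "z \<in> C" "int i \<le> lvl d P z" for C z
    using lvl_le_clvl[OF finite_clus_block[OF that(1)] that(2), of d P] that(3) Suc
    unfolding active_def by simp
  have "Cy \<in> ?r\<^sup>* `` {Cx}"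
  proof (cases "Cx = Cy")
    case False
    have "cdist d (terms P) (clus d P j) Cx Cy \<le> d x y"
      using C assms(2,3) valid_instance_dist_nonneg[OF vi] by (intro cdist_le_dist) auto
    then have "{Cx, Cy} \<in> Hedges d P (clus d P j) j"
      unfolding Hedges_def using C False active assms(4-6) Suc by fastforce
    then have "(Cx, Cy) \<in> ?r"
      by (simp add: hrel_def)
    then show ?thesis
      by auto
  qed simp
  moreover have "\<Union> (?r\<^sup>* `` {Cx}) \<in> clus d P i"
    unfolding Suc clus_Suc_eq using C active assms(4) by blast
  ultimately show ?thesis
    using C(2,4) by (intro bexI[of _ "\<Union> (?r\<^sup>* `` {Cx})"]) auto
qed

section \<open>Clusterings grow with the instance\<close>

lemma terms_mono: "set P \<subseteq> set P' \<Longrightarrow> terms P \<subseteq> terms P'"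
  unfolding terms_def by blast

lemma active_mono:
  assumes "valid_instance d P'" "set P \<subseteq> set P'"
    and "C \<subseteq> terms P" "C \<noteq> {}" "C \<subseteq> D" "finite D" "active d P j C"
  shows "active d P' j D"
proof -
  have "lvl d P ` C = lvl d P' ` C"
    using lvl_eq_if_subset[OF assms(1,2)] assms(3) by (intro image_cong) auto
  moreover have "Max (lvl d P' ` C) \<le> Max (lvl d P' ` D)"
    using assms(4-6) by (intro Max_mono image_mono) auto
  ultimately have "clvl d P C \<le> clvl d P' D"
    unfolding clvl_def by simp
  then show ?thesis
    using assms(7) unfolding active_def by simp
qed

lemma hrel_lift:
  assumes vi: "valid_instance d P'" and sub: "set P \<subseteq> set P'"
    and Cs: "partition_on (terms P) Cs" and Ds: "partition_on (terms P') Ds"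
    and coarser: "\<forall>C\<in>Cs. \<exists>D\<in>Ds. C \<subseteq> D"
    and edge: "(C1, C2) \<in> hrel d P Cs j"
    and D: "D1 \<in> Ds" "D2 \<in> Ds" "C1 \<subseteq> D1" "C2 \<subseteq> D2" "D1 \<noteq> D2"
  shows "(D1, D2) \<in> hrel d P' Ds j"
proof -
  have C: "C \<noteq> {}" "C \<subseteq> terms P" if "C \<in> Cs" for C
    using partition_onD1[OF Cs] partition_onD3[OF Cs] that by blast+
  have fin: "finite D" if "D \<in> Ds" for D
  proof (rule finite_subset[OF _ finite_terms])
    show "D \<subseteq> terms P'"
      using partition_onD1[OF Ds] that by blast
  qed
  have C12: "C1 \<in> Cs" "C2 \<in> Cs"
    using hrelD(1,2)[OF edge] .
  have "active d P' j D1" "active d P' j D2"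
    using active_mono[OF vi sub C(2)[OF C12(1)] C(1)[OF C12(1)] D(3) fin[OF D(1)] hrelD(3)[OF edge]]
      active_mono[OF vi sub C(2)[OF C12(2)] C(1)[OF C12(2)] D(4) fin[OF D(2)] hrelD(4)[OF edge]] .
  moreover have "cdist d (terms P') Ds D1 D2 \<le> cdist d (terms P) Cs C1 C2"
    "cdist d (terms P') Ds D2 D1 \<le> cdist d (terms P) Cs C2 C1"
    using C12 C D terms_mono[OF sub] valid_instance_dist_nonneg[OF vi] coarser
    by (auto intro!: cdist_mono)
  then have "cdist d (terms P') Ds D1 D2 < 2 ^ (j + 1) \<or> cdist d (terms P') Ds D2 D1 < 2 ^ (j + 1)"
    using hrelD(6)[OF edge] by linarith
  ultimately show ?thesis
    unfolding hrel_def Hedges_def using D by (auto simp: insert_commute)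
qed

lemma rtrancl_lift_to_blocks:
  assumes "(C, C') \<in> r\<^sup>*" "C \<subseteq> D" "D \<in> Ds"
    and cover: "\<And>C1 C2. (C1, C2) \<in> r \<Longrightarrow> \<exists>D2\<in>Ds. C2 \<subseteq> D2"
    and lift: "\<And>C1 C2 D1 D2. (C1, C2) \<in> r \<Longrightarrow> C1 \<subseteq> D1 \<Longrightarrow> C2 \<subseteq> D2 \<Longrightarrow> D1 \<in> Ds \<Longrightarrow> D2 \<in> Ds \<Longrightarrow>
      D1 \<noteq> D2 \<Longrightarrow> (D1, D2) \<in> r'"
  shows "\<exists>D'\<in>Ds. C' \<subseteq> D' \<and> (D, D') \<in> r'\<^sup>*"
  using assms(1)
proof (induction rule: rtrancl_induct)
  case base
  then show ?case
    using assms(2,3) by blast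
next
  case (step C1 C2)
  then obtain D1 where D1: "D1 \<in> Ds" "C1 \<subseteq> D1" "(D, D1) \<in> r'\<^sup>*"
    by blast
  obtain D2 where D2: "D2 \<in> Ds" "C2 \<subseteq> D2"
    using cover[OF step.hyps(2)] by blast
  have "(D1, D2) \<in> r' \<or> D1 = D2"
    using lift[OF step.hyps(2) D1(2) D2(2) D1(1) D2(1)] by blast
  then have "(D, D2) \<in> r'\<^sup>*"
    using D1(3) by (auto intro: rtrancl_into_rtrancl)
  then show ?case
    using D2 by blast
qed

lemma clus_Suc_coarser: "C \<in> clus d P i \<Longrightarrow> \<exists>D\<in>clus d P (Suc i). C \<subseteq> D"
  unfolding clus_Suc_eq by blast

lemma merged_cluster_refines:
  assumes vi: "valid_instance d P'" and sub: "set P \<subseteq> set P'"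
    and coarser: "\<forall>C\<in>clus d P j. \<exists>D\<in>clus d P' j. C \<subseteq> D"
    and A: "A \<in> clus d P j" "active d P j A"
  shows "\<exists>D\<in>clus d P' (Suc j). \<Union> ((hrel d P (clus d P j) j)\<^sup>* `` {A}) \<subseteq> D"
proof -
  let ?r = "hrel d P (clus d P j) j" and ?r' = "hrel d P' (clus d P' j) j"
  obtain D0 where D0: "D0 \<in> clus d P' j" "A \<subseteq> D0"
    using coarser A(1) by blast
  have "active d P' j D0"
    using active_mono[OF vi sub clus_subset clus_nonempty D0(2) finite_clus_block] A D0(1) by blast
  then have merged: "\<Union> (?r'\<^sup>* `` {D0}) \<in> clus d P' (Suc j)"
    unfolding clus_Suc_eq using D0(1) by blast
  have "\<exists>D'\<in>clus d P' j. C' \<subseteq> D' \<and> (D0, D') \<in> ?r'\<^sup>*" if "(A, C') \<in> ?r\<^sup>*" for C'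
    using that D0(2,1)
  proof (rule rtrancl_lift_to_blocks)
    show "\<exists>D2\<in>clus d P' j. C2 \<subseteq> D2" if "(C1, C2) \<in> ?r" for C1 C2
      using coarser hrelD(2)[OF that] by blast
    show "(D1, D2) \<in> ?r'" if "(C1, C2) \<in> ?r" "C1 \<subseteq> D1" "C2 \<subseteq> D2"
      "D1 \<in> clus d P' j" "D2 \<in> clus d P' j" "D1 \<noteq> D2" for C1 C2 D1 D2
      using hrel_lift[OF vi sub partition_on_clus partition_on_clus coarser that(1) that(4,5,2,3,6)] .
  qed
  then have "\<Union> (?r\<^sup>* `` {A}) \<subseteq> \<Union> (?r'\<^sup>* `` {D0})"
    by blast
  then show ?thesis
    using merged by blast
qed

lemma clus_refines:
  assumes vi: "valid_instance d P'" and sub: "set P \<subseteq> set P'"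
  shows "\<forall>C\<in>clus d P i. \<exists>D\<in>clus d P' i. C \<subseteq> D"
proof (induction i)
  case 0
  then show ?case
    using terms_mono[OF sub] by auto
next
  case (Suc j)
  show ?case
  proof
    fix C assume "C \<in> clus d P (Suc j)"
    then consider "C \<in> clus d P j"
      | A where "C = \<Union> ((hrel d P (clus d P j) j)\<^sup>* `` {A})" "A \<in> clus d P j" "active d P j A"
      unfolding clus_Suc_eq by blast
    then show "\<exists>D\<in>clus d P' (Suc j). C \<subseteq> D"
    proof cases
      case 1
      then show ?thesis
        using Suc.IH clus_Suc_coarser by (meson order_trans)
    next
      case (2 A)
      then show ?thesis
        using merged_cluster_refines[OF vi sub Suc.IH 2(2,3)] by simp
    qed
  qed
qed

section \<open>Active and new clusters over time\<close>

definition block_of :: "'a set set \<Rightarrow> 'a set \<Rightarrow> 'a set" where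
  "block_of Ds C = (THE D. D \<in> Ds \<and> C \<subseteq> D)"

lemma block_of_eq:
  assumes "partition_on V Ds" "C \<noteq> {}" "D \<in> Ds" "C \<subseteq> D"
  shows "block_of Ds C = D"
  unfolding block_of_def
proof (rule the_equality)
  fix D' assume D': "D' \<in> Ds \<and> C \<subseteq> D'"
  obtain x where "x \<in> C"
    using assms(2) by blast
  then show "D' = D"
    using partition_on_block_eq[OF assms(1) _ assms(3), of D' x] D' assms(4) by blast
qed (use assms in blast)

definition active_clusters :: "(nat \<Rightarrow> nat \<Rightarrow> real) \<Rightarrow> (nat \<times> nat) list \<Rightarrow> nat \<Rightarrow> nat \<Rightarrow> nat set set" where
  "active_clusters d ps t i = {C \<in> clus d (take t ps) i. active d (take t ps) i C}"

definition new_clusters :: "(nat \<Rightarrow> nat \<Rightarrow> real) \<Rightarrow> (nat \<times> nat) list \<Rightarrow> nat \<Rightarrow> nat \<Rightarrow> nat set set" where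
  "new_clusters d ps t i =
     {D \<in> active_clusters d ps t i. \<not> (\<exists>C\<in>active_clusters d ps (t - 1) i. C \<subseteq> D)}"

lemma finite_active_clusters: "finite (active_clusters d ps t i)"
  unfolding active_clusters_def using finite_clus by simp

lemma clus_Nil: "clus d [] i = {}"
  using partition_on_clus[of "[]"] by (simp add: terms_def partition_on_empty)

lemma active_clusters_0: "active_clusters d ps 0 i = {}"
  by (simp add: active_clusters_def clus_Nil)

lemma H_0: "H d ps 0 i = {}"
  by (simp add: H_def Hedges_def clus_Nil)

lemma H_iff_hrel: "{C1, C2} \<in> H d ps t i \<longleftrightarrow> (C1, C2) \<in> hrel d (take t ps) (clus d (take t ps) i) i"
  by (simp add: H_def hrel_def)

lemma H_edge:
  "e \<in> H d ps t i \<Longrightarrow> \<exists>C1 C2. e = {C1, C2} \<and> C1 \<in> active_clusters d ps t i \<and> C2 \<in> active_clusters d ps t i"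
  unfolding H_def Hedges_def active_clusters_def by blast

lemma finite_H: "finite (H d ps t i)"
proof (rule finite_subset)
  show "H d ps t i \<subseteq> Pow (active_clusters d ps t i)"
    using H_edge by blast
qed (simp add: finite_active_clusters)

lemma admissible_F_subset_H:
  assumes "admissible d ps Finh F" "t \<le> length ps"
  shows "F t i \<subseteq> H d ps t i"
  using assms unfolding admissible_def spanning_forest_def by (cases t) auto

lemma admissible_conn_F:
  assumes "admissible d ps Finh F" "t \<le> length ps"
  shows "conn (F t i) = conn (H d ps t i)"
  using assms unfolding admissible_def by (cases t) (auto simp: H_0 spanning_forest_conn)

lemma terms_take_last:
  assumes "1 \<le> t" "t \<le> length ps"
  shows "terms (take t ps) = terms (take (t - 1) ps) \<union> {fst (ps ! (t - 1)), snd (ps ! (t - 1))}"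
proof -
  have "t = Suc (t - 1)" "t - 1 < length ps"
    using assms by auto
  then have "take t ps = take (t - 1) ps @ [ps ! (t - 1)]"
    by (metis take_Suc_conv_app_nth)
  then show ?thesis
    by (auto simp: terms_def)
qed

lemma terms_take_mono: "s \<le> t \<Longrightarrow> terms (take s ps) \<subseteq> terms (take t ps)"
  by (rule terms_mono[OF set_take_subset_set_take])

lemma old_active_cluster_inside:
  assumes vi: "valid_instance d ps" and D: "D \<in> clus d (take t ps) i" "x \<in> D"
    and x: "x \<in> terms (take (t - 1) ps)" "int i \<le> lvl d ps x"
  shows "\<exists>C\<in>active_clusters d ps (t - 1) i. C \<subseteq> D"
proof -
  have sub: "set (take (t - 1) ps) \<subseteq> set (take t ps)" "set (take (t - 1) ps) \<subseteq> set ps"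
    by (simp_all add: set_take_subset_set_take set_take_subset)
  obtain C where C: "C \<in> clus d (take (t - 1) ps) i" "x \<in> C"
    using clus_cover[OF x(1)] by blast
  obtain D' where "D' \<in> clus d (take t ps) i" "C \<subseteq> D'"
    using clus_refines[OF valid_instance_take[OF vi] sub(1)] C(1) by blast
  then have "C \<subseteq> D"
    using clus_block_eq D C(2) by blast
  moreover have "active d (take (t - 1) ps) i C"
    using lvl_le_clvl[OF finite_clus_block[OF C(1)] C(2), of d "take (t - 1) ps"]
      lvl_eq_if_subset[OF vi sub(2) x(1)] x(2)
    unfolding active_def by simp
  ultimately show ?thesis
    using C(1) unfolding active_clusters_def by blast
qed

lemma new_cluster_has_new_endpoint:
  assumes vi: "valid_instance d ps" and t: "1 \<le> t" "t \<le> length ps"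
    and D: "D \<in> new_clusters d ps t i"
  shows "\<exists>x\<in>D. x \<in> {fst (ps ! (t - 1)), snd (ps ! (t - 1))} \<and> int i \<le> lvl d ps x"
proof -
  have DC: "D \<in> clus d (take t ps) i" "active d (take t ps) i D"
    using D unfolding new_clusters_def active_clusters_def by auto
  have "clvl d (take t ps) D \<in> lvl d (take t ps) ` D"
    unfolding clvl_def using finite_clus_block[OF DC(1)] clus_nonempty[OF DC(1)] by (intro Max_in) auto
  then obtain x where x: "x \<in> D" "lvl d (take t ps) x = clvl d (take t ps) D"
    by auto
  have "x \<in> terms (take t ps)"
    using clus_subset[OF DC(1)] x(1) by blast
  moreover have "set (take t ps) \<subseteq> set ps"
    by (rule set_take_subset)
  ultimately have lx: "int i \<le> lvl d ps x"
    using x(2) DC(2) lvl_eq_if_subset[OF vi] unfolding active_def by simp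
  then have "x \<notin> terms (take (t - 1) ps)"
    using old_active_cluster_inside[OF vi DC(1) x(1)] D unfolding new_clusters_def by blast
  then show ?thesis
    using \<open>x \<in> terms (take t ps)\<close> terms_take_last[OF t] x(1) lx by blast
qed

lemma card_new_clusters_le:
  assumes "valid_instance d ps" "1 \<le> t" "t \<le> length ps"
  shows "card (new_clusters d ps t i) \<le> 2"
proof -
  let ?ends = "{fst (ps ! (t - 1)), snd (ps ! (t - 1))}"
  have "new_clusters d ps t i \<subseteq> (\<lambda>x. block_of (clus d (take t ps) i) {x}) ` ?ends"
  proof
    fix D assume D: "D \<in> new_clusters d ps t i"
    then obtain x where "x \<in> D" "x \<in> ?ends"
      using new_cluster_has_new_endpoint[OF assms] by blast
    moreover have "D \<in> clus d (take t ps) i"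
      using D unfolding new_clusters_def active_clusters_def by blast
    ultimately show "D \<in> (\<lambda>x. block_of (clus d (take t ps) i) {x}) ` ?ends"
      using block_of_eq[OF partition_on_clus, of "{x}" D] by blast
  qed
  then have "card (new_clusters d ps t i) \<le> card ?ends"
    by (meson card_image_le card_mono finite.emptyI finite.insertI finite_imageI order_trans)
  also have "\<dots> \<le> 2"
    by (simp add: card_insert_le_m1)
  finally show ?thesis .
qed

lemma new_cluster_far_from_earlier_pairs:
  assumes vi: "valid_instance d ps" and t: "1 \<le> t" "t < t'" "t' \<le> length ps"
    and x: "x \<in> {fst (ps ! (t - 1)), snd (ps ! (t - 1))}" "int i \<le> lvl d ps x"
    and D: "D \<in> new_clusters d ps t' i" "y \<in> D" and y: "int i \<le> lvl d ps y"
  shows "2 ^ i \<le> d x y"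
proof (rule ccontr)
  assume "\<not> 2 ^ i \<le> d x y"
  let ?P = "take t' ps"
  have DC: "D \<in> clus d ?P i"
    using D unfolding new_clusters_def active_clusters_def by blast
  have "x \<in> terms (take t ps)"
    using terms_take_last[OF t(1), of ps] t x(1) by auto
  moreover have "t \<le> t' - 1"
    using t(2) by simp
  ultimately have x_old: "x \<in> terms (take (t' - 1) ps)"
    using terms_take_mono[of t "t' - 1" ps] by blast
  then have "x \<in> terms ?P"
    using terms_take_mono[of "t' - 1" t' ps] by auto
  moreover have "y \<in> terms ?P"
    using clus_subset[OF DC] D(2) by blast
  moreover have "set ?P \<subseteq> set ps"
    by (rule set_take_subset)
  ultimately obtain C where "C \<in> clus d ?P i" "x \<in> C" "y \<in> C"
    using clus_same_block[OF valid_instance_take[OF vi]] lvl_eq_if_subset[OF vi] x(2) y \<open>\<not> 2 ^ i \<le> d x y\<close>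
    by (metis not_le)
  then have "x \<in> D"
    using clus_block_eq DC D(2) by blast
  then show False
    using old_active_cluster_inside[OF vi DC _ x_old x(2)] D(1) unfolding new_clusters_def by blast
qed

section \<open>Counting non-inherited edges\<close>

lemma admissible_F_hrel:
  assumes "admissible d ps Finh F" "t \<le> length ps" "{A, B} \<in> F t i"
  shows "(A, B) \<in> hrel d (take t ps) (clus d (take t ps) i) i"
  using admissible_F_subset_H[OF assms(1,2)] assms(3) by (auto simp flip: H_iff_hrel)

lemma inherited_edge_lift:
  assumes vi: "valid_instance d ps" and adm: "admissible d ps Finh F" and t: "1 \<le> t" "t \<le> length ps"
    and "{A, B} \<in> F (t - 1) i" "A \<subseteq> D1" "B \<subseteq> D2"
    and "D1 \<in> clus d (take t ps) i" "D2 \<in> clus d (take t ps) i" "D1 \<noteq> D2"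
  shows "{D1, D2} \<in> inherited d ps t i (F (t - 1) i) \<inter> H d ps t i"
proof -
  have sub: "set (take (t - 1) ps) \<subseteq> set (take t ps)"
    by (simp add: set_take_subset_set_take)
  have "{D1, D2} \<in> inherited d ps t i (F (t - 1) i)"
    unfolding inherited_def using assms(5-10) by blast
  moreover have "(A, B) \<in> hrel d (take (t - 1) ps) (clus d (take (t - 1) ps) i) i"
    using admissible_F_hrel[OF adm _ assms(5)] t by simp
  then have "{D1, D2} \<in> H d ps t i"
    using hrel_lift[OF valid_instance_take[OF vi] sub partition_on_clus partition_on_clus
        clus_refines[OF valid_instance_take[OF vi] sub]] assms(6-10)
    unfolding H_iff_hrel by blast
  ultimately show ?thesis
    by simp
qed

lemma conn_inherited_block_of:
  assumes vi: "valid_instance d ps" and adm: "admissible d ps Finh F"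
    and t: "1 \<le> t" "t \<le> length ps"
    and C: "C1 \<in> clus d (take (t - 1) ps) i" "C2 \<in> clus d (take (t - 1) ps) i"
    and "(C1, C2) \<in> conn (H d ps (t - 1) i)"
  defines "Ds \<equiv> clus d (take t ps) i"
  shows "(block_of Ds C1, block_of Ds C2) \<in> conn (inherited d ps t i (F (t - 1) i) \<inter> H d ps t i)"
proof -
  let ?Q = "inherited d ps t i (F (t - 1) i) \<inter> H d ps t i"
  have sub: "set (take (t - 1) ps) \<subseteq> set (take t ps)"
    by (simp add: set_take_subset_set_take)
  note coarser = clus_refines[OF valid_instance_take[OF vi] sub]
  have block: "block_of Ds C \<in> Ds \<and> C \<subseteq> block_of Ds C" if "C \<in> clus d (take (t - 1) ps) i" for C
    using coarser that block_of_eq[OF partition_on_clus clus_nonempty[OF that]] unfolding Ds_def by metis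
  have "(C1, C2) \<in> {(a, b). {a, b} \<in> F (t - 1) i}\<^sup>*"
    using assms(7) admissible_conn_F[OF adm, of "t - 1" i] t by (simp add: conn_def)
  then have "\<exists>D'\<in>Ds. C2 \<subseteq> D' \<and> (block_of Ds C1, D') \<in> {(a, b). {a, b} \<in> ?Q}\<^sup>*"
  proof (rule rtrancl_lift_to_blocks)
    show "C1 \<subseteq> block_of Ds C1" "block_of Ds C1 \<in> Ds"
      using block[OF C(1)] by auto
    show "\<exists>D2\<in>Ds. B \<subseteq> D2" if "(A, B) \<in> {(a, b). {a, b} \<in> F (t - 1) i}" for A B
      using that coarser hrelD(2)[OF admissible_F_hrel[OF adm]] t unfolding Ds_def by auto
    show "(D1, D2) \<in> {(a, b). {a, b} \<in> ?Q}"
      if "(A, B) \<in> {(a, b). {a, b} \<in> F (t - 1) i}" "A \<subseteq> D1" "B \<subseteq> D2" "D1 \<in> Ds" "D2 \<in> Ds" "D1 \<noteq> D2"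
      for A B D1 D2
      using inherited_edge_lift[OF vi adm t] that unfolding Ds_def by blast
  qed
  then obtain D' where D': "D' \<in> Ds" "C2 \<subseteq> D'" "(block_of Ds C1, D') \<in> conn ?Q"
    unfolding conn_def by blast
  moreover have "block_of Ds C2 = D'"
    using block_of_eq[OF partition_on_clus clus_nonempty[OF C(2)]] D'(1,2) unfolding Ds_def by blast
  ultimately show ?thesis
    by simp
qed

lemma card_old_components_le:
  fixes i :: nat
  assumes vi: "valid_instance d ps" and adm: "admissible d ps Finh F"
    and t: "1 \<le> t" "t \<le> length ps"
  defines "Q \<equiv> inherited d ps t i (F (t - 1) i) \<inter> H d ps t i"
    and "V \<equiv> active_clusters d ps t i" and "V' \<equiv> active_clusters d ps (t - 1) i"
  shows "card (component Q V ` (V - new_clusters d ps t i)) \<le> num_components (H d ps (t - 1) i) V'"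
proof -
  let ?Ds = "clus d (take t ps) i"
  have V'_clus: "C \<in> clus d (take (t - 1) ps) i" if "C \<in> V'" for C
    using that unfolding V'_def active_clusters_def by blast
  have "component Q V ` (V - new_clusters d ps t i) \<subseteq> (\<lambda>C. component Q V (block_of ?Ds C)) ` V'"
  proof
    fix K assume "K \<in> component Q V ` (V - new_clusters d ps t i)"
    then obtain D C where "K = component Q V D" "D \<in> ?Ds" "C \<in> V'" "C \<subseteq> D"
      unfolding new_clusters_def V_def V'_def active_clusters_def by blast
    moreover have "block_of ?Ds C = D"
      using block_of_eq[OF partition_on_clus clus_nonempty[OF V'_clus]] calculation(2-4) by blast
    ultimately show "K \<in> (\<lambda>C. component Q V (block_of ?Ds C)) ` V'"
      by blast
  qed
  then have "card (component Q V ` (V - new_clusters d ps t i))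
      \<le> card ((\<lambda>C. component Q V (block_of ?Ds C)) ` V')"
    by (simp add: card_mono V'_def finite_active_clusters)
  also have "\<dots> \<le> card (component (H d ps (t - 1) i) V' ` V')"
  proof (rule card_image_le_factor)
    fix C1 C2
    assume C: "C1 \<in> V'" "C2 \<in> V'" "component (H d ps (t - 1) i) V' C1 = component (H d ps (t - 1) i) V' C2"
    then have "(C1, C2) \<in> conn (H d ps (t - 1) i)"
      using component_self[of C2 V'] unfolding component_def by blast
    then show "component Q V (block_of ?Ds C1) = component Q V (block_of ?Ds C2)"
      using conn_inherited_block_of[OF vi adm t V'_clus V'_clus] C(1,2) unfolding Q_def
      by (intro component_eq) blast
  qed (simp add: V'_def finite_active_clusters)
  finally show ?thesis
    unfolding num_components_def .
qed

lemma card_non_inherited_step: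
  assumes vi: "valid_instance d ps" and adm: "admissible d ps Finh F"
    and t: "1 \<le> t" "t \<le> length ps"
  shows "card (F t i - Finh t i) + num_components (H d ps t i) (active_clusters d ps t i)
    \<le> num_components (H d ps (t - 1) i) (active_clusters d ps (t - 1) i) + card (new_clusters d ps t i)"
proof -
  let ?Q = "inherited d ps t i (F (t - 1) i) \<inter> H d ps t i"
  let ?V = "active_clusters d ps t i" and ?N = "new_clusters d ps t i"
  have Finh: "spanning_forest ?Q (Finh t i)" "Finh t i \<subseteq> F t i"
    and F: "spanning_forest (H d ps t i) (F t i)"
    using adm t unfolding admissible_def by auto
  have FH: "F t i \<subseteq> H d ps t i"
    using F unfolding spanning_forest_def by blast
  have "card (F t i - Finh t i) + num_components (F t i) ?V \<le> num_components (Finh t i) ?V"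
  proof (rule forest_extension_card_le)
    show "is_forest (F t i)"
      using F unfolding spanning_forest_def by blast
    show "finite (F t i)"
      using FH finite_H finite_subset by blast
  qed (use Finh(2) FH H_edge finite_active_clusters in auto)
  moreover have "num_components (F t i) ?V = num_components (H d ps t i) ?V"
    by (rule num_components_cong[OF spanning_forest_conn[OF F]])
  moreover have "num_components (Finh t i) ?V = num_components ?Q ?V"
    by (rule num_components_cong[OF spanning_forest_conn[OF Finh(1)]])
  moreover have "num_components ?Q ?V \<le> card (component ?Q ?V ` (?V - ?N)) + card ?N"
  proof -
    have "component ?Q ?V ` ?V = component ?Q ?V ` (?V - ?N) \<union> component ?Q ?V ` ?N"
      unfolding new_clusters_def by blast
    then have "num_components ?Q ?V \<le> card (component ?Q ?V ` (?V - ?N)) + card (component ?Q ?V ` ?N)"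
      unfolding num_components_def by (simp add: card_Un_le)
    also have "card (component ?Q ?V ` ?N) \<le> card ?N"
      by (rule card_image_le) (simp add: new_clusters_def finite_active_clusters)
    finally show ?thesis
      by simp
  qed
  ultimately show ?thesis
    using card_old_components_le[OF vi adm t, of i] by linarith
qed

lemma sum_card_non_inherited_le:
  assumes vi: "valid_instance d ps" and adm: "admissible d ps Finh F"
  shows "(\<Sum>t = 1..length ps. card (F t i - Finh t i)) \<le> (\<Sum>t = 1..length ps. card (new_clusters d ps t i))"
proof -
  let ?\<Phi> = "\<lambda>t. num_components (H d ps t i) (active_clusters d ps t i)"
  have "(\<Sum>t = 1..m. card (F t i - Finh t i)) + ?\<Phi> m \<le> (\<Sum>t = 1..m. card (new_clusters d ps t i))"
    if "m \<le> length ps" for m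
    using that
  proof (induction m)
    case 0
    then show ?case
      by (simp add: num_components_def active_clusters_0)
  next
    case (Suc m)
    then show ?case
      using card_non_inherited_step[OF vi adm, of "Suc m" i] by simp
  qed
  then show ?thesis
    using le_add1 order_trans by blast
qed

lemma sum_card_new_clusters_le:
  assumes "valid_instance d ps"
  shows "(\<Sum>t = 1..length ps. card (new_clusters d ps t i))
    \<le> 2 * card {t \<in> {1..length ps}. new_clusters d ps t i \<noteq> {}}"
proof -
  have "(\<Sum>t = 1..length ps. card (new_clusters d ps t i))
      \<le> (\<Sum>t = 1..length ps. if new_clusters d ps t i \<noteq> {} then 2 else 0)"
    using card_new_clusters_le[OF assms] by (intro sum_mono) auto
  also have "\<dots> = 2 * card {t \<in> {1..length ps}. new_clusters d ps t i \<noteq> {}}"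
    by (simp add: sum.If_cases Int_def conj_commute)
  finally show ?thesis .
qed

lemma pair_end_in_terms:
  "1 \<le> t \<Longrightarrow> t \<le> length ps \<Longrightarrow> x \<in> {fst (ps ! (t - 1)), snd (ps ! (t - 1))} \<Longrightarrow> x \<in> terms ps"
  by (force simp: terms_def)

lemma new_cluster_witnesses:
  fixes i :: nat
  assumes vi: "valid_instance d ps"
  defines "T \<equiv> {t \<in> {1..length ps}. new_clusters d ps t i \<noteq> {}}"
  obtains w where "inj_on w T" "w ` T \<subseteq> terms ps" "\<And>t. t \<in> T \<Longrightarrow> int i \<le> lvl d ps (w t)"
    and "\<And>t t'. t \<in> T \<Longrightarrow> t' \<in> T \<Longrightarrow> t \<noteq> t' \<Longrightarrow> 2 ^ i \<le> d (w t) (w t')"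
proof -
  have "\<forall>t\<in>T. \<exists>x. x \<in> {fst (ps ! (t - 1)), snd (ps ! (t - 1))} \<and> int i \<le> lvl d ps x \<and>
      (\<exists>D\<in>new_clusters d ps t i. x \<in> D)"
    using new_cluster_has_new_endpoint[OF vi] unfolding T_def by fastforce
  then obtain w where w: "\<And>t. t \<in> T \<Longrightarrow> w t \<in> {fst (ps ! (t - 1)), snd (ps ! (t - 1))}"
    "\<And>t. t \<in> T \<Longrightarrow> int i \<le> lvl d ps (w t)" "\<And>t. t \<in> T \<Longrightarrow> \<exists>D\<in>new_clusters d ps t i. w t \<in> D"
    by metis
  have w_terms: "w t \<in> terms ps" if "t \<in> T" for t
    using pair_end_in_terms w(1)[OF that] that unfolding T_def by auto
  have far: "2 ^ i \<le> d (w t) (w t')" if "t \<in> T" "t' \<in> T" "t < t'" for t t'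
    using w[OF that(1)] w[OF that(2)] that new_cluster_far_from_earlier_pairs[OF vi] unfolding T_def by fastforce
  have sep: "2 ^ i \<le> d (w t) (w t')" if "t \<in> T" "t' \<in> T" "t \<noteq> t'" for t t'
  proof (cases "t < t'")
    case False
    then have "2 ^ i \<le> d (w t') (w t)"
      using far that by simp
    then show ?thesis
      using valid_instance_dist_sym[OF vi w_terms w_terms] that(1,2) by simp
  qed (use far that in blast)
  have "inj_on w T"
  proof (rule inj_onI)
    fix t t' assume t: "t \<in> T" "t' \<in> T" and "w t = w t'"
    then have "d (w t) (w t') = 0"
      using valid_instance_dist_self[OF vi w_terms] by simp
    then show "t = t'"
      using sep[OF t] zero_less_power[of "2::real" i] by fastforce
  qed
  then show ?thesis
    using that w(2) w_terms sep by blast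
qed

lemma card_new_times_le_OPT:
  assumes vi: "valid_instance d ps"
  shows "card {t \<in> {1..length ps}. new_clusters d ps t i \<noteq> {}} * (2 ^ i / 2) \<le> 2 * OPT d ps"
proof -
  let ?T = "{t \<in> {1..length ps}. new_clusters d ps t i \<noteq> {}}"
  obtain w where w: "inj_on w ?T" "w ` ?T \<subseteq> terms ps" "\<And>t. t \<in> ?T \<Longrightarrow> int i \<le> lvl d ps (w t)"
    and sep: "\<And>t t'. t \<in> ?T \<Longrightarrow> t' \<in> ?T \<Longrightarrow> t \<noteq> t' \<Longrightarrow> 2 ^ i \<le> d (w t) (w t')"
    using new_cluster_witnesses[OF vi] by blast
  have "card ?T * (2 ^ i / 2) = card (w ` ?T) * (2 ^ i / 2)"
    using w(1) by (simp add: card_image)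
  also have "\<dots> \<le> 2 * OPT d ps"
  proof (rule moat_lower_bound_OPT[OF vi w(2)])
    show "\<exists>y. (x, y) \<in> set ps \<union> (set ps)\<inverse> \<and> 2 ^ i / 2 \<le> d x y" if "x \<in> w ` ?T" for x
      using that w(2,3) far_from_mate_if_lvl_ge[OF vi] by blast
    show "2 * (2 ^ i / 2) \<le> d x y" if "x \<in> w ` ?T" "y \<in> w ` ?T" "x \<noteq> y" for x y
      using that sep by auto
  qed simp
  finally show ?thesis .
qed

theorem theorem4p7:
  "\<exists>c::real. \<forall>(ps :: (nat \<times> nat) list) (d :: nat \<Rightarrow> nat \<Rightarrow> real)
      (Finh :: nat \<Rightarrow> nat \<Rightarrow> nat set set set) (F :: nat \<Rightarrow> nat \<Rightarrow> nat set set set) (i :: nat).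
     valid_instance d ps \<and> admissible d ps Finh F \<longrightarrow>
     (\<Sum>t = 1..length ps. real (card (F t i - Finh t i)) * 2 ^ (i + 1)) \<le> c * OPT d ps"
proof (intro exI[of _ 16] allI impI, elim conjE)
  fix ps d Finh F i
  assume vi: "valid_instance d ps" and adm: "admissible d ps Finh F"
  let ?T = "{t \<in> {1..length ps}. new_clusters d ps t i \<noteq> {}}"
  have "(\<Sum>t = 1..length ps. card (F t i - Finh t i)) \<le> 2 * card ?T"
    using sum_card_non_inherited_le[OF vi adm] sum_card_new_clusters_le[OF vi] by (rule order_trans)
  then have "(\<Sum>t = 1..length ps. real (card (F t i - Finh t i))) * 2 ^ (i + 1) \<le> real (2 * card ?T) * 2 ^ (i + 1)"
    by (intro mult_right_mono) (simp_all flip: of_nat_sum)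
  also have "\<dots> = 8 * (card ?T * (2 ^ i / 2))"
    by simp
  also have "\<dots> \<le> 8 * (2 * OPT d ps)"
    using card_new_times_le_OPT[OF vi, of i] by (rule mult_left_mono) simp
  finally show "(\<Sum>t = 1..length ps. real (card (F t i - Finh t i)) * 2 ^ (i + 1)) \<le> 16 * OPT d ps"
    by (simp add: sum_distrib_right)
qed

end
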